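(* Let $A = \begin{pmatrix} 2 & 1 \\ 1 & 1\end{pmatrix}$, $\lambda = \frac{3+\sqrt5}{2}$, and let $M_A$ be the suspension of $A$ with the Riemannian metric $ds^2 = dz^2 + e^{2z\log\lambda}du^2 + e^{-2z\log\lambda}dv^2$ (see context). Then the restrictions of the geodesic flow on $SM_A$ to the invariant submanifolds $V^+ = \{p_u=p_v=0,\ p_z=1\}$ and $V^- = \{p_u=p_v=0,\ p_z=-1\}$ are Anosov flows.
   Context: $T^2 = \mathbb{R}^2/\mathbb{Z}^2$ with $A$ acting linearly; $M_A$ is the quotient of $T^2 \times \mathbb{R}$ by the $\mathbb{Z}$-action generated by $(X,z)\mapsto (AX,z+1)$. $(u,v)$ are linear coordinates on $\mathbb{R}^2$ in which $A(u,v) = (\lambda^{-1}u,\lambda v)$; the metric above is invariant under the $\mathbb{Z}$-action and descends to $M_A$. $(p_u,p_v,p_z)$ are the momenta conjugate to $(u,v,z)$, and the geodesic flow is the Hamiltonian flow of $H = \frac12(p_z^2 + e^{-2z\log\lambda}p_u^2 + e^{2z\log\lambda}p_v^2)$ on $SM_A = \{H = 1/2\}$. *)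

theory Defs
  imports "HOL-Analysis.Analysis"
begin

text \<open>lambda = (3 + sqrt 5)/2, the expanding eigenvalue of A.\<close>
definition lam :: real where "lam = (3 + sqrt 5) / 2"

definition A_mat :: "real^2^2" where
  "A_mat = vector [vector [2, 1], vector [1, 1]]"

definition eigen_coords :: "(real^2 \<Rightarrow> real^2) \<Rightarrow> bool" where
  "eigen_coords P \<longleftrightarrow> linear P \<and> bij P \<and>
     (\<forall>X. P (A_mat *v X) = vector [(P X)$1 / lam, lam * (P X)$2])"

text \<open>Points of the universal cover T*R^3: (q,p) with q = (u,v,z), p = (p_u,p_v,p_z).\<close>
definition ham :: "(real^3) \<times> (real^3) \<Rightarrow> real" where
  "ham = (\<lambda>(q, p). ((p$3)^2 + exp (-2 * q$3 * ln lam) * (p$1)^2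
                              + exp (2 * q$3 * ln lam) * (p$2)^2) / 2)"

definition hamiltonian_flow ::
  "((real^3) \<times> (real^3) \<Rightarrow> real) \<Rightarrow> (real \<Rightarrow> (real^3) \<times> (real^3) \<Rightarrow> (real^3) \<times> (real^3)) \<Rightarrow> bool" where
  "hamiltonian_flow H \<Phi> \<longleftrightarrow> (\<forall>x. \<Phi> 0 x = x) \<and>
     (\<forall>x t. \<exists>a b. (H has_derivative (\<lambda>hk. a \<bullet> fst hk + b \<bullet> snd hk)) (at (\<Phi> t x)) \<and>
                 ((\<lambda>s. \<Phi> s x) has_vector_derivative (b, - a)) (at t))"

definition metric_norm :: "real^3 \<Rightarrow> real^3 \<Rightarrow> real" where
  "metric_norm q w = sqrt ((w$3)^2 + exp (2 * q$3 * ln lam) * (w$1)^2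
                                   + exp (-2 * q$3 * ln lam) * (w$2)^2)"

text \<open>Generators of the deck group of R^3 -> M_A in coordinates (u,v,z):
  lattice translations (P n, 0), n in Z^2, and (u,v,z) |-> (u/lambda, lambda v, z+1).\<close>
definition deck_generators :: "(real^2 \<Rightarrow> real^2) \<Rightarrow> (real^3 \<Rightarrow> real^3) set" where
  "deck_generators P =
     {(\<lambda>q. q + vector [(P (vector [of_int a, of_int b]))$1,
                       (P (vector [of_int a, of_int b]))$2, 0]) | a b :: int. True}
     \<union> {(\<lambda>q. vector [q$1 / lam, lam * q$2, q$3 + 1])}"

text \<open>Anosov property of a flow on a compact quotient M = X/Gamma, stated on the cover X
  (a Euclidean space), with a Gamma-invariant Riemannian norm N and a Gamma-equivariant
  continuous invariant splitting E^s + E^u + R.(generator), with uniform constants.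
  G is a generating set of the deck group Gamma.\<close>
definition anosov_cover ::
  "('a::euclidean_space \<Rightarrow> 'a) set \<Rightarrow> ('a \<Rightarrow> 'a \<Rightarrow> real) \<Rightarrow> (real \<Rightarrow> 'a \<Rightarrow> 'a) \<Rightarrow> bool" where
  "anosov_cover G N \<phi> \<longleftrightarrow>
     (\<forall>t x. \<phi> t differentiable (at x)) \<and>
     (\<exists>X Es Eu Ps Pu C \<mu>. C > 0 \<and> \<mu> > 0 \<and>
        (\<forall>x. ((\<lambda>t. \<phi> t x) has_vector_derivative X x) (at 0) \<and> X x \<noteq> 0) \<and>
        (\<forall>x. subspace (Es x) \<and> subspace (Eu x)) \<and>
        (\<forall>x a b c. a \<in> Es x \<longrightarrow> b \<in> Eu x \<longrightarrow> a + b + c *\<^sub>R X x = 0 \<longrightarrow>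
                   a = 0 \<and> b = 0 \<and> c = 0) \<and>
        (\<forall>x w. Ps x w \<in> Es x \<and> Pu x w \<in> Eu x \<and> w - Ps x w - Pu x w \<in> span {X x}) \<and>
        continuous_on UNIV (\<lambda>(x, w). Ps x w) \<and>
        continuous_on UNIV (\<lambda>(x, w). Pu x w) \<and>
        (\<forall>t x v. v \<in> Es x \<longrightarrow> frechet_derivative (\<phi> t) (at x) v \<in> Es (\<phi> t x)) \<and>
        (\<forall>t x v. v \<in> Eu x \<longrightarrow> frechet_derivative (\<phi> t) (at x) v \<in> Eu (\<phi> t x)) \<and>
        (\<forall>t x v. t \<ge> 0 \<longrightarrow> v \<in> Es x \<longrightarrow>
           N (\<phi> t x) (frechet_derivative (\<phi> t) (at x) v) \<le> C * exp (- \<mu> * t) * N x v) \<and>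
        (\<forall>t x v. t \<ge> 0 \<longrightarrow> v \<in> Eu x \<longrightarrow>
           N (\<phi> (- t) x) (frechet_derivative (\<phi> (- t)) (at x) v) \<le> C * exp (- \<mu> * t) * N x v) \<and>
        (\<forall>\<gamma>\<in>G. \<forall>x v. \<gamma> differentiable (at x) \<and>
           (v \<in> Es x \<longrightarrow> frechet_derivative \<gamma> (at x) v \<in> Es (\<gamma> x)) \<and>
           (v \<in> Eu x \<longrightarrow> frechet_derivative \<gamma> (at x) v \<in> Eu (\<gamma> x))))"

end

theory Submission
  imports Defs
begin

(* On V^+ and V^- the equations of motion give p_u' = p_v' = 0 everywhere, so p_u and p_v stay 0,
   and then p_z' = 0 as well: the flow is the vertical translation q |-> q + t (0,0,sigma).
   Its differential is the identity, whereas the metric weighs du by lambda^z and dv by lambda^-z.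
   Hence the v-axis is contracted and the u-axis expanded at rate sigma log lambda (the roles
   swap for sigma < 0), and both axis line fields are preserved by the deck group, whose
   generators are diagonal affine maps. *)

definition ham_grad_q :: "real^3 \<Rightarrow> real^3 \<Rightarrow> real^3" where
  "ham_grad_q q p = vector [0, 0,
     ln lam * (exp (2 * q$3 * ln lam) * (p$2)\<^sup>2 - exp (-2 * q$3 * ln lam) * (p$1)\<^sup>2)]"

definition ham_grad_p :: "real^3 \<Rightarrow> real^3 \<Rightarrow> real^3" where
  "ham_grad_p q p = vector [exp (-2 * q$3 * ln lam) * p$1, exp (2 * q$3 * ln lam) * p$2, p$3]"

lemma has_derivative_vec_nth [derivative_intros]:
  "(f has_derivative f') F \<Longrightarrow> ((\<lambda>x. f x $ i) has_derivative (\<lambda>h. f' h $ i)) F"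
  by (rule bounded_linear.has_derivative[OF bounded_linear_vec_nth])

lemma has_vector_derivative_vec_nth:
  "(f has_vector_derivative f') F \<Longrightarrow> ((\<lambda>x. f x $ i) has_real_derivative f' $ i) F"
  using bounded_linear.has_vector_derivative[OF bounded_linear_vec_nth]
  by (simp add: has_real_derivative_iff_has_vector_derivative)

lemma has_derivative_ham:
  "(ham has_derivative (\<lambda>hk. ham_grad_q q p \<bullet> fst hk + ham_grad_p q p \<bullet> snd hk)) (at (q, p))"
  unfolding ham_def ham_grad_q_def ham_grad_p_def
  by (rule derivative_eq_intros refl | simp)+
     (simp add: fun_eq_iff inner_vec_def sum_3 field_simps power2_eq_square)

lemma inner_pair_functional_inject:
  fixes a a' :: "'a::real_inner" and b b' :: "'b::real_inner"
  assumes "(\<lambda>hk. a \<bullet> fst hk + b \<bullet> snd hk) = (\<lambda>hk. a' \<bullet> fst hk + b' \<bullet> snd hk)"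
  shows "a = a'" "b = b'"
proof -
  have "(a - a') \<bullet> (a - a') = 0" "(b - b') \<bullet> (b - b') = 0"
    using fun_cong[OF assms, of "(a - a', 0)"] fun_cong[OF assms, of "(0, b - b')"]
    by (simp_all add: inner_diff_left)
  then show "a = a'" "b = b'" by simp_all
qed

lemma hamiltonian_flow_ham_equations:
  assumes "hamiltonian_flow ham \<Phi>"
  shows "((\<lambda>s. \<Phi> s x) has_vector_derivative
           (ham_grad_p (fst (\<Phi> t x)) (snd (\<Phi> t x)),
            - ham_grad_q (fst (\<Phi> t x)) (snd (\<Phi> t x)))) (at t)"
proof -
  obtain a b where
    grad: "(ham has_derivative (\<lambda>hk. a \<bullet> fst hk + b \<bullet> snd hk)) (at (\<Phi> t x))" and
    ode: "((\<lambda>s. \<Phi> s x) has_vector_derivative (b, - a)) (at t)"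
    using assms unfolding hamiltonian_flow_def by blast
  have "a = ham_grad_q (fst (\<Phi> t x)) (snd (\<Phi> t x))"
    and "b = ham_grad_p (fst (\<Phi> t x)) (snd (\<Phi> t x))"
    using has_derivative_ham[of "fst (\<Phi> t x)" "snd (\<Phi> t x)"]
      inner_pair_functional_inject[OF has_derivative_unique[OF grad]] by simp_all
  with ode show ?thesis by simp
qed

lemma hamiltonian_flow_vertical:
  assumes "hamiltonian_flow ham \<Phi>" and e: "e = vector [0, 0, \<sigma>]"
  shows "\<Phi> t (q, e) = (q + t *\<^sub>R e, e)"
proof -
  define Q where "Q s = fst (\<Phi> s (q, e))" for s
  define p where "p s = snd (\<Phi> s (q, e))" for s
  have init: "Q 0 = q" "p 0 = e"
    using assms(1) by (simp_all add: hamiltonian_flow_def Q_def p_def)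
  have ode: "((\<lambda>s. (Q s, p s)) has_vector_derivative
      (ham_grad_p (Q s) (p s), - ham_grad_q (Q s) (p s))) (at s)" for s
    using hamiltonian_flow_ham_equations[OF assms(1)] by (simp add: Q_def p_def)
  have dQ: "(Q has_vector_derivative ham_grad_p (Q s) (p s)) (at s)" for s
    using bounded_linear.has_vector_derivative[OF bounded_linear_fst ode] by simp
  have dp: "((\<lambda>s. p s $ i) has_real_derivative - ham_grad_q (Q s) (p s) $ i) (at s)" for i s
    using has_vector_derivative_vec_nth bounded_linear.has_vector_derivative[OF bounded_linear_snd ode]
    by fastforce
  have p12: "p s $ 1 = 0" "p s $ 2 = 0" for s
    using DERIV_isconst_all[of "\<lambda>s. p s $ 1" s 0] DERIV_isconst_all[of "\<lambda>s. p s $ 2" s 0]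
      dp[of 1] dp[of 2] init e by (simp_all add: ham_grad_q_def)
  have "p s $ 3 = \<sigma>" for s
    using DERIV_isconst_all[of "\<lambda>s. p s $ 3" s 0] dp[of 3] p12 init e by (simp add: ham_grad_q_def)
  with p12 have p: "p s = e" for s
    using e by (simp add: vec_eq_iff forall_3)
  have "((\<lambda>s. Q s - s *\<^sub>R e) has_derivative (\<lambda>h. 0)) (at s)" for s
    using dQ[of s] p e
    by (auto intro!: derivative_eq_intros simp: has_vector_derivative_def ham_grad_p_def)
  then have "Q t - t *\<^sub>R e = Q 0 - 0 *\<^sub>R e"
    by (intro has_derivative_zero_unique[where s = UNIV]) auto
  with init p show ?thesis by (simp add: Q_def p_def prod_eq_iff algebra_simps)
qed

lemma ln_lam_pos: "ln lam > 0"
proof -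
  have "lam > 1"
    unfolding lam_def by (simp add: field_simps add_pos_pos)
  then show ?thesis by simp
qed

lemma sqrt_exp_double_mult_square: "sqrt (exp (2 * x) * s\<^sup>2) = exp x * \<bar>s\<bar>"
  by (simp add: exp_double power_mult_distrib[symmetric] abs_mult)

lemma metric_norm_axis1: "metric_norm q (s *\<^sub>R axis 1 1) = exp (q$3 * ln lam) * \<bar>s\<bar>"
  using sqrt_exp_double_mult_square[of "q$3 * ln lam" s]
  by (simp add: metric_norm_def axis_def mult.assoc)

lemma metric_norm_axis2: "metric_norm q (s *\<^sub>R axis 2 1) = exp (- (q$3 * ln lam)) * \<bar>s\<bar>"
  using sqrt_exp_double_mult_square[of "- (q$3 * ln lam)" s]
  by (simp add: metric_norm_def axis_def mult.assoc)

lemma deck_generator_diagonal_affine: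
  assumes "\<gamma> \<in> deck_generators P"
  obtains d c where "\<gamma> = (\<lambda>q. d * q + c)"
  using assms unfolding deck_generators_def
proof (elim UnE)
  assume "\<gamma> \<in> {\<lambda>q. vector [q $ 1 / lam, lam * q $ 2, q $ 3 + 1]}"
  then have "\<gamma> = (\<lambda>q. vector [1 / lam, lam, 1] * q + axis 3 1)"
    by (auto simp: fun_eq_iff vec_eq_iff forall_3 axis_def)
  then show thesis by (rule that)
qed (auto intro: that[of 1])

lemma diagonal_affine_has_derivative:
  "((\<lambda>q::real^'n. d * q + c) has_derivative (\<lambda>h. d * h)) (at x)"
proof -
  have "linear (\<lambda>h::real^'n. d * h)"
    by (rule linearI) (simp_all add: vec_eq_iff algebra_simps)
  then show ?thesis
    by (auto intro!: derivative_eq_intros linear_imp_has_derivative)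
qed

lemma deck_generator_preserves_axes:
  assumes "\<gamma> \<in> deck_generators P"
  shows "\<gamma> differentiable (at x)"
    and "v \<in> span {axis k 1} \<Longrightarrow> frechet_derivative \<gamma> (at x) v \<in> span {axis k (1::real)}"
proof -
  obtain d c where \<gamma>: "\<gamma> = (\<lambda>q. d * q + c)"
    using deck_generator_diagonal_affine[OF assms] .
  show "\<gamma> differentiable (at x)"
    unfolding \<gamma> using diagonal_affine_has_derivative differentiable_def by blast
  assume "v \<in> span {axis k 1}"
  then obtain s where "v = s *\<^sub>R axis k 1"
    by (auto simp: span_singleton)
  moreover have "d * (s *\<^sub>R axis k 1) = (s * d $ k) *\<^sub>R axis k 1"
    by (simp add: vec_eq_iff axis_def)
  ultimately show "frechet_derivative \<gamma> (at x) v \<in> span {axis k (1::real)}"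
    unfolding \<gamma> frechet_derivative_at[OF diagonal_affine_has_derivative, symmetric]
    by (simp add: span_singleton)
qed

lemma frechet_derivative_translation:
  "frechet_derivative (\<lambda>q. q + c) (at x) = (\<lambda>h. h)"
  by (rule frechet_derivative_at[symmetric]) (auto intro!: derivative_eq_intros)

lemma axes_vertical_direct_sum:
  fixes ks ku :: 3
  assumes e: "e = vector [0, 0, \<sigma>]" and axes: "{ks, ku} = {1, 2}" and "\<sigma> \<noteq> 0"
  shows "a \<in> span {axis ks 1} \<Longrightarrow> b \<in> span {axis ku 1} \<Longrightarrow> a + b + c *\<^sub>R e = 0 \<Longrightarrow>
      a = 0 \<and> b = 0 \<and> c = 0"
    and "w - (w $ ks) *\<^sub>R axis ks 1 - (w $ ku) *\<^sub>R axis ku 1 \<in> span {e}"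
proof -
  have idx: "ks = 1 \<and> ku = 2 \<or> ks = 2 \<and> ku = 1"
    using axes by (auto simp: doubleton_eq_iff)
  show "a \<in> span {axis ks 1} \<Longrightarrow> b \<in> span {axis ku 1} \<Longrightarrow> a + b + c *\<^sub>R e = 0 \<Longrightarrow>
      a = 0 \<and> b = 0 \<and> c = 0"
    using idx \<open>\<sigma> \<noteq> 0\<close> by (auto simp: e span_singleton vec_eq_iff forall_3 axis_def)
  have "w - (w $ ks) *\<^sub>R axis ks 1 - (w $ ku) *\<^sub>R axis ku 1 = (w $ 3 / \<sigma>) *\<^sub>R e"
    using idx \<open>\<sigma> \<noteq> 0\<close> by (auto simp: e vec_eq_iff forall_3 axis_def)
  then show "w - (w $ ks) *\<^sub>R axis ks 1 - (w $ ku) *\<^sub>R axis ku 1 \<in> span {e}"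
    by (simp add: span_mul span_base)
qed

lemma anosov_cover_vertical_translation_flow:
  fixes ks ku :: 3
  assumes e: "e = vector [0, 0, \<sigma>]" and axes: "{ks, ku} = {1, 2}" and "\<sigma> \<noteq> 0"
    and "C > 0" and "\<mu> > 0"
    and stable: "\<And>x s t. t \<ge> 0 \<Longrightarrow> metric_norm (x + t *\<^sub>R e) (s *\<^sub>R axis ks 1)
                    \<le> C * exp (- \<mu> * t) * metric_norm x (s *\<^sub>R axis ks 1)"
    and unstable: "\<And>x s t. t \<ge> 0 \<Longrightarrow> metric_norm (x + (- t) *\<^sub>R e) (s *\<^sub>R axis ku 1)
                    \<le> C * exp (- \<mu> * t) * metric_norm x (s *\<^sub>R axis ku 1)"
  shows "anosov_cover (deck_generators P) metric_norm (\<lambda>t q. q + t *\<^sub>R e)"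
proof -
  have "\<forall>t x. (\<lambda>q. q + t *\<^sub>R e) differentiable (at x)"
    by (auto intro!: derivative_eq_intros)
  moreover have "\<forall>x. ((\<lambda>t. x + t *\<^sub>R e) has_vector_derivative e) (at 0) \<and> e \<noteq> 0"
    using \<open>\<sigma> \<noteq> 0\<close> by (auto intro!: derivative_eq_intros simp: e vec_eq_iff forall_3)
  moreover note axes_vertical_direct_sum[OF e axes \<open>\<sigma> \<noteq> 0\<close>]
  moreover have "subspace (span {axis k (1::real)})" for k :: 3
    by (rule subspace_span)
  moreover have "(w $ k) *\<^sub>R axis k 1 \<in> span {axis k (1::real)}" for w :: "real^3" and k
    by (simp add: span_mul span_base)
  moreover have "v \<in> span {axis k 1} \<Longrightarrow>
      frechet_derivative (\<lambda>q. q + t *\<^sub>R e) (at x) v \<in> span {axis k (1::real)}" for k t x v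
    by (simp add: frechet_derivative_translation)
  moreover have "continuous_on UNIV (\<lambda>(x, w). (w $ k) *\<^sub>R axis k (1::real))" for k :: 3
    by (auto simp: case_prod_beta' intro!: continuous_intros)
  moreover have "\<forall>\<gamma>\<in>deck_generators P. \<forall>x v. \<gamma> differentiable (at x) \<and>
      (v \<in> span {axis ks 1} \<longrightarrow> frechet_derivative \<gamma> (at x) v \<in> span {axis ks 1}) \<and>
      (v \<in> span {axis ku 1} \<longrightarrow> frechet_derivative \<gamma> (at x) v \<in> span {axis ku 1})"
    using deck_generator_preserves_axes by blast
  moreover have "\<forall>t x v. t \<ge> 0 \<longrightarrow> v \<in> span {axis ks 1} \<longrightarrow>
      metric_norm (x + t *\<^sub>R e) (frechet_derivative (\<lambda>q. q + t *\<^sub>R e) (at x) v)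
        \<le> C * exp (- \<mu> * t) * metric_norm x v"
    using stable by (auto simp: frechet_derivative_translation span_singleton)
  moreover have "\<forall>t x v. t \<ge> 0 \<longrightarrow> v \<in> span {axis ku 1} \<longrightarrow>
      metric_norm (x + (- t) *\<^sub>R e) (frechet_derivative (\<lambda>q. q + (- t) *\<^sub>R e) (at x) v)
        \<le> C * exp (- \<mu> * t) * metric_norm x v"
    using unstable
    by (auto simp: frechet_derivative_translation span_singleton simp del: scaleR_minus_left)
  ultimately show ?thesis
    unfolding anosov_cover_def using \<open>C > 0\<close> \<open>\<mu> > 0\<close>
    by - (rule conjI, blast, rule exI[of _ "\<lambda>_. e"],
        rule exI[of _ "\<lambda>_. span {axis ks 1}"], rule exI[of _ "\<lambda>_. span {axis ku 1}"],
        rule exI[of _ "\<lambda>_ w. (w $ ks) *\<^sub>R axis ks 1"],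
        rule exI[of _ "\<lambda>_ w. (w $ ku) *\<^sub>R axis ku 1"], rule exI[of _ C], rule exI[of _ \<mu>],
        blast)
qed

lemma metric_norm_axes_vertical_translation:
  "metric_norm (x + t *\<^sub>R vector [0, 0, \<sigma>]) (s *\<^sub>R axis 1 1)
     = exp (\<sigma> * ln lam * t) * metric_norm x (s *\<^sub>R axis 1 1)"
  "metric_norm (x + t *\<^sub>R vector [0, 0, \<sigma>]) (s *\<^sub>R axis 2 1)
     = exp (- \<sigma> * ln lam * t) * metric_norm x (s *\<^sub>R axis 2 1)"
  by (simp_all add: metric_norm_axis1 metric_norm_axis2 mult_exp_exp algebra_simps)

lemma anosov_cover_vertical_flow:
  assumes "\<sigma> \<noteq> 0"
  shows "anosov_cover (deck_generators P) metric_norm (\<lambda>t q. q + t *\<^sub>R vector [0, 0, \<sigma>])"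
proof (cases "\<sigma> > 0")
  case True
  then show ?thesis
    by (intro anosov_cover_vertical_translation_flow
          [where ks = 2 and ku = 1 and C = 1 and \<mu> = "\<sigma> * ln lam"])
      (auto simp: metric_norm_axes_vertical_translation ln_lam_pos simp del: scaleR_minus_left)
next
  case False
  with assms have "\<sigma> < 0" by simp
  then show ?thesis
    by (intro anosov_cover_vertical_translation_flow
          [where ks = 1 and ku = 2 and C = 1 and \<mu> = "- \<sigma> * ln lam"])
      (auto simp: metric_norm_axes_vertical_translation ln_lam_pos mult_neg_pos
        simp del: scaleR_minus_left)
qed

theorem corollary2:
  fixes P :: "real^2 \<Rightarrow> real^2"
    and \<Phi> :: "real \<Rightarrow> (real^3) \<times> (real^3) \<Rightarrow> (real^3) \<times> (real^3)"
  assumes "eigen_coords P"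
    and "hamiltonian_flow ham \<Phi>"
  shows "\<forall>e \<in> {vector [0, 0, 1], vector [0, 0, -1]}.
           (\<forall>t q. snd (\<Phi> t (q, e)) = e) \<and>
           anosov_cover (deck_generators P) metric_norm (\<lambda>t q. fst (\<Phi> t (q, e)))"
proof
  fix e :: "real^3"
  assume "e \<in> {vector [0, 0, 1], vector [0, 0, -1]}"
  then obtain \<sigma> :: real where e: "e = vector [0, 0, \<sigma>]" and "\<sigma> \<noteq> 0"
    by auto
  have flow: "\<Phi> t (q, e) = (q + t *\<^sub>R e, e)" for t q
    using hamiltonian_flow_vertical[OF assms(2) e] .
  then have "(\<lambda>t q. fst (\<Phi> t (q, e))) = (\<lambda>t q. q + t *\<^sub>R vector [0, 0, \<sigma>])"
    by (simp add: e)
  with flow anosov_cover_vertical_flow[OF \<open>\<sigma> \<noteq> 0\<close>]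
  show "(\<forall>t q. snd (\<Phi> t (q, e)) = e) \<and>
      anosov_cover (deck_generators P) metric_norm (\<lambda>t q. fst (\<Phi> t (q, e)))"
    by simp
qed

end
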